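(* Let $N\in\mathbb{N}$, $0\le\mu<L<\infty$, and let $M$ be a method which, for coefficients $\{\alpha_{i,j}\}_{i=1,\dots,N;\,j=0,\dots,i-1}$, generates iterates satisfying $w_k-w_\star=(w_0-w_\star)(1-\frac{\mu}{L}\sum_{i=0}^{k-1}\alpha_{k,i})-\sum_{i=0}^{k-1}\frac{\alpha_{k,i}}{L}\nabla\tilde f(w_i)$, $k=1,\dots,N$, where $\tilde f(x)=f(x)-\frac\mu2\|x-w_\star\|^2$. For any $d\in\mathbb{N}$, $w_0\in\mathbb{R}^d$, $f\in\mathcal{F}_{\mu,L}(\mathbb{R}^d)$, $w_\star\in\arg\min_w f(w)$ and $w_N$ the output of $M$ on $f$ from $w_0$, it holds that $\|w_N-w_\star\|^2\le \mathrm{UB}_{\mu,L}(\{\alpha_{i,j}\})\,\|w_0-w_\star\|^2$, with $\mathrm{UB}_{\mu,L}$ as defined in the context.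
   Context: $\mathcal{F}_{\mu,L}(\mathbb{R}^d)$ denotes the set of proper closed convex functions $f:\mathbb{R}^d\to\mathbb{R}$ such that for all $x,y$: $f(x)\le f(y)+\langle\nabla f(y);x-y\rangle+\frac L2\|x-y\|^2$ and $f(x)\ge f(y)+\langle\nabla f(y);x-y\rangle+\frac\mu2\|x-y\|^2$. Let $e_i$ denote unit vectors; set $\mathbf{w}_0=e_1\in\mathbb{R}^{N+1}$, $\mathbf{g}_i=e_{i+2}\in\mathbb{R}^{N+1}$, $\mathbf{f}_i=e_{i+1}\in\mathbb{R}^N$ ($i=0,\dots,N-1$), and $\mathbf{w}_k=\mathbf{w}_0(1-\frac{\mu}{L}\sum_{i=0}^{k-1}\alpha_{k,i})-\sum_{i=0}^{k-1}\frac{\alpha_{k,i}}{L}\mathbf{g}_i$ for $k=1,\dots,N$. With scalars $\tau$, $\lambda_{i,i+1}$ ($i=0,\dots,N-2$), $\lambda_{\star,i}$ ($i=0,\dots,N-1$), $\lambda_{N-1,\star}$, define the symmetric matrix $S=\tau\mathbf{w}_0\mathbf{w}_0^\top-\mathbf{w}_N\mathbf{w}_N^\top+\frac{\lambda_{N-1,\star}}{2(L-\mu)}\mathbf{g}_{N-1}\mathbf{g}_{N-1}^\top+\sum_{i=0}^{N-1}\frac{\lambda_{\star,i}}{2}\big(-\mathbf{g}_i\mathbf{w}_i^\top-\mathbf{w}_i\mathbf{g}_i^\top+\frac{1}{L-\mu}\mathbf{g}_i\mathbf{g}_i^\top\big)+\sum_{i=0}^{N-2}\frac{\lambda_{i,i+1}}{2}\big(\mathbf{g}_{i+1}(\mathbf{w}_i-\mathbf{w}_{i+1})^\top+(\mathbf{w}_i-\mathbf{w}_{i+1})\mathbf{g}_{i+1}^\top+\frac{1}{L-\mu}(\mathbf{g}_i-\mathbf{g}_{i+1})(\mathbf{g}_i-\mathbf{g}_{i+1})^\top\big)$.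 $\mathrm{UB}_{\mu,L}(\{\alpha_{i,j}\})$ is the optimal value of: minimize $\tau$ over $\tau$ and all $\lambda$'s $\ge0$ subject to $S\succeq0$ and $\sum_{i=0}^{N-2}\lambda_{i,i+1}(\mathbf{f}_{i+1}-\mathbf{f}_i)+\sum_{i=0}^{N-1}\lambda_{\star,i}\mathbf{f}_i-\lambda_{N-1,\star}\mathbf{f}_{N-1}=0$. *)

theory Defs
  imports "HOL-Analysis.Analysis"
begin

definition F_class :: "real \<Rightarrow> real \<Rightarrow> ('a::euclidean_space \<Rightarrow> real) \<Rightarrow> ('a \<Rightarrow> 'a) \<Rightarrow> bool" where
  "F_class \<mu> L f g \<longleftrightarrow>
     convex_on UNIV f \<and>
     (\<forall>x. (f has_derivative (\<lambda>h. g x \<bullet> h)) (at x)) \<and>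
     (\<forall>x y. f x \<le> f y + g y \<bullet> (x - y) + L / 2 * (norm (x - y))\<^sup>2) \<and>
     (\<forall>x y. f x \<ge> f y + g y \<bullet> (x - y) + \<mu> / 2 * (norm (x - y))\<^sup>2)"

text \<open>Vectors of R^m are functions nat => real, only indices < m matter (0-based:
  e_1 is index 0). Matrices are nat => nat => real.\<close>
definition ev :: "nat \<Rightarrow> nat \<Rightarrow> real" where
  "ev i = (\<lambda>j. if j = i then 1 else 0)"

definition wv0 :: "nat \<Rightarrow> real" where "wv0 = ev 0"
definition gv :: "nat \<Rightarrow> nat \<Rightarrow> real" where "gv i = ev (i + 2 - 1)"
definition fv :: "nat \<Rightarrow> nat \<Rightarrow> real" where "fv i = ev (i + 1 - 1)"

definition wv :: "real \<Rightarrow> real \<Rightarrow> (nat \<Rightarrow> nat \<Rightarrow> real) \<Rightarrow> nat \<Rightarrow> nat \<Rightarrow> real" where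
  "wv \<mu> L \<alpha> k = (\<lambda>j. wv0 j * (1 - \<mu> / L * (\<Sum>i<k. \<alpha> k i))
                       - (\<Sum>i<k. \<alpha> k i / L * gv i j))"

definition outer :: "(nat \<Rightarrow> real) \<Rightarrow> (nat \<Rightarrow> real) \<Rightarrow> nat \<Rightarrow> nat \<Rightarrow> real" where
  "outer u v = (\<lambda>i j. u i * v j)"

definition Smat :: "real \<Rightarrow> real \<Rightarrow> (nat \<Rightarrow> nat \<Rightarrow> real) \<Rightarrow> nat \<Rightarrow> real \<Rightarrow>
    (nat \<Rightarrow> real) \<Rightarrow> (nat \<Rightarrow> real) \<Rightarrow> real \<Rightarrow> nat \<Rightarrow> nat \<Rightarrow> real" where
  "Smat \<mu> L \<alpha> N \<tau> lam lamS lamN = (\<lambda>a b.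
      \<tau> * outer wv0 wv0 a b
    - outer (wv \<mu> L \<alpha> N) (wv \<mu> L \<alpha> N) a b
    + lamN / (2 * (L - \<mu>)) * outer (gv (N - 1)) (gv (N - 1)) a b
    + (\<Sum>i<N. lamS i / 2 * ( - outer (gv i) (wv \<mu> L \<alpha> i) a b - outer (wv \<mu> L \<alpha> i) (gv i) a b
                              + 1 / (L - \<mu>) * outer (gv i) (gv i) a b))
    + (\<Sum>i<N - 1. lam i / 2 *
         ( outer (gv (i + 1)) (\<lambda>j. wv \<mu> L \<alpha> i j - wv \<mu> L \<alpha> (i + 1) j) a b
         + outer (\<lambda>j. wv \<mu> L \<alpha> i j - wv \<mu> L \<alpha> (i + 1) j) (gv (i + 1)) a b
         + 1 / (L - \<mu>) * outer (\<lambda>j. gv i j - gv (i + 1) j) (\<lambda>j. gv i j - gv (i + 1) j) a b)))"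

definition psd :: "nat \<Rightarrow> (nat \<Rightarrow> nat \<Rightarrow> real) \<Rightarrow> bool" where
  "psd m S \<longleftrightarrow> (\<forall>x::nat \<Rightarrow> real. 0 \<le> (\<Sum>a<m. \<Sum>b<m. x a * S a b * x b))"

definition UB_feasible :: "real \<Rightarrow> real \<Rightarrow> (nat \<Rightarrow> nat \<Rightarrow> real) \<Rightarrow> nat \<Rightarrow> real \<Rightarrow>
    (nat \<Rightarrow> real) \<Rightarrow> (nat \<Rightarrow> real) \<Rightarrow> real \<Rightarrow> bool" where
  "UB_feasible \<mu> L \<alpha> N \<tau> lam lamS lamN \<longleftrightarrow>
     (\<forall>i<N - 1. 0 \<le> lam i) \<and> (\<forall>i<N. 0 \<le> lamS i) \<and> 0 \<le> lamN \<and>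
     psd (N + 1) (Smat \<mu> L \<alpha> N \<tau> lam lamS lamN) \<and>
     (\<forall>j<N. (\<Sum>i<N - 1. lam i * (fv (i + 1) j - fv i j)) + (\<Sum>i<N. lamS i * fv i j)
              - lamN * fv (N - 1) j = 0)"

text \<open>Optimal value of the SDP (as an extended real; +infinity if infeasible).\<close>
definition UB :: "real \<Rightarrow> real \<Rightarrow> (nat \<Rightarrow> nat \<Rightarrow> real) \<Rightarrow> nat \<Rightarrow> ereal" where
  "UB \<mu> L \<alpha> N = Inf {ereal \<tau> | \<tau> lam lamS lamN. UB_feasible \<mu> L \<alpha> N \<tau> lam lamS lamN}"

end

theory Submission
  imports Defs
begin

(* The shifted function f - mu/2 |x - ws|^2 is convex and (L - mu)-smooth, so any two points
   satisfy the interpolation inequality of the class F_{0,L-mu}. The linear map sending e_1 to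
   w_0 - ws and e_{i+2} to the shifted gradient at w_i sends the coefficient vector w_k of the
   SDP to w_k - ws, by the update rule of the method.  So for a feasible point of the SDP the
   Gram form of S on these vectors, which is nonnegative, equals tau |w_0 - ws|^2 - |w_N - ws|^2 plus
   the lambda-weighted sum of interpolation inequalities, whose function values cancel by the
   linear constraint.  Hence |w_N - ws|^2 <= tau |w_0 - ws|^2 for every feasible tau. *)

lemma smooth_convex_interpolation:
  fixes h :: "'a::real_inner \<Rightarrow> real" and G :: "'a \<Rightarrow> 'a"
  assumes K: "0 < K"
    and upper: "\<forall>x y. h x \<le> h y + G y \<bullet> (x - y) + K / 2 * (norm (x - y))\<^sup>2"
    and lower: "\<forall>x y. h y + G y \<bullet> (x - y) \<le> h x"
  shows "h y + G y \<bullet> (x - y) + (norm (G x - G y))\<^sup>2 / (2 * K) \<le> h x"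
proof -
  define d where "d = G x - G y"
  define z where "z = x - (1 / K) *\<^sub>R d"
  have "h y + G y \<bullet> (z - y) \<le> h x + G x \<bullet> (z - x) + K / 2 * (norm (z - x))\<^sup>2"
    using upper lower order_trans by blast
  moreover have "G x \<bullet> (z - x) - G y \<bullet> (z - y) = - (G y \<bullet> (x - y)) - (norm d)\<^sup>2 / K"
    by (simp add: z_def d_def inner_diff_left inner_diff_right power2_norm_eq_inner
        inner_commute[of "G y" "G x"] diff_divide_distrib add_divide_distrib)
  moreover have "K / 2 * (norm (z - x))\<^sup>2 = (norm d)\<^sup>2 / (2 * K)"
    using K by (simp add: z_def power_mult_distrib power2_eq_square)
  ultimately show ?thesis by (simp add: d_def)
qed

definition shifted_fun :: "real \<Rightarrow> 'a::real_inner \<Rightarrow> ('a \<Rightarrow> real) \<Rightarrow> 'a \<Rightarrow> real" where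
  "shifted_fun \<mu> ws f x = f x - \<mu> / 2 * (norm (x - ws))\<^sup>2"

definition shifted_grad :: "real \<Rightarrow> 'a::real_inner \<Rightarrow> ('a \<Rightarrow> 'a) \<Rightarrow> 'a \<Rightarrow> 'a" where
  "shifted_grad \<mu> ws g x = g x - \<mu> *\<^sub>R (x - ws)"

lemma shifted_linearization_error:
  "shifted_fun \<mu> ws f x - shifted_fun \<mu> ws f y - shifted_grad \<mu> ws g y \<bullet> (x - y)
     = f x - f y - g y \<bullet> (x - y) - \<mu> / 2 * (norm (x - y))\<^sup>2"
proof -
  have "\<mu> / 2 * (norm (x - y))\<^sup>2
      = \<mu> / 2 * (norm (x - ws))\<^sup>2 - \<mu> / 2 * (norm (y - ws))\<^sup>2 - (\<mu> *\<^sub>R (y - ws)) \<bullet> (x - y)"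
    by (simp add: power2_norm_eq_inner inner_diff_left inner_diff_right inner_commute
        algebra_simps)
  then show ?thesis
    unfolding shifted_fun_def shifted_grad_def inner_diff_left by linarith
qed

lemma F_class_shifted_bounds:
  assumes "F_class \<mu> L f g"
  shows "shifted_fun \<mu> ws f x
           \<le> shifted_fun \<mu> ws f y + shifted_grad \<mu> ws g y \<bullet> (x - y) + (L - \<mu>) / 2 * (norm (x - y))\<^sup>2"
    and "shifted_fun \<mu> ws f y + shifted_grad \<mu> ws g y \<bullet> (x - y) \<le> shifted_fun \<mu> ws f x"
proof -
  have "f x \<le> f y + g y \<bullet> (x - y) + L / 2 * (norm (x - y))\<^sup>2"
    and "f y + g y \<bullet> (x - y) + \<mu> / 2 * (norm (x - y))\<^sup>2 \<le> f x"
    using assms by (simp_all add: F_class_def)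
  then show "shifted_fun \<mu> ws f x
           \<le> shifted_fun \<mu> ws f y + shifted_grad \<mu> ws g y \<bullet> (x - y) + (L - \<mu>) / 2 * (norm (x - y))\<^sup>2"
    and "shifted_fun \<mu> ws f y + shifted_grad \<mu> ws g y \<bullet> (x - y) \<le> shifted_fun \<mu> ws f x"
    using shifted_linearization_error[of \<mu> ws f x y g]
    by (simp_all add: left_diff_distrib diff_divide_distrib)
qed

lemma F_class_shifted_interpolation:
  assumes "\<mu> < L" and "F_class \<mu> L f g"
  shows "shifted_fun \<mu> ws f y + shifted_grad \<mu> ws g y \<bullet> (x - y)
           + (norm (shifted_grad \<mu> ws g x - shifted_grad \<mu> ws g y))\<^sup>2 / (2 * (L - \<mu>))
         \<le> shifted_fun \<mu> ws f x"
  by (rule smooth_convex_interpolation) (use assms F_class_shifted_bounds in auto)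

lemma F_class_minimizer_grad_eq_0:
  assumes "F_class \<mu> L f g" and "\<forall>v. f ws \<le> f v"
  shows "g ws = 0"
proof -
  have "(f has_derivative (\<lambda>h. g ws \<bullet> h)) (at ws)"
    using assms(1) by (simp add: F_class_def)
  then have "(\<lambda>h. g ws \<bullet> h) = (\<lambda>h. 0)"
    using assms(2) by (intro differential_zero_maxmin[of ws UNIV]) auto
  then have "g ws \<bullet> g ws = 0" by metis
  then show ?thesis by simp
qed

definition gram_form :: "nat \<Rightarrow> (nat \<Rightarrow> 'a::real_inner) \<Rightarrow> (nat \<Rightarrow> nat \<Rightarrow> real) \<Rightarrow> real" where
  "gram_form m X M = (\<Sum>a<m. \<Sum>b<m. M a b * (X a \<bullet> X b))"

definition lincomb :: "nat \<Rightarrow> (nat \<Rightarrow> 'a::real_vector) \<Rightarrow> (nat \<Rightarrow> real) \<Rightarrow> 'a" where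
  "lincomb m X u = (\<Sum>a<m. u a *\<^sub>R X a)"

lemma gram_form_add: "gram_form m X (\<lambda>a b. M a b + M' a b) = gram_form m X M + gram_form m X M'"
  by (simp add: gram_form_def algebra_simps sum.distrib)

lemma gram_form_diff: "gram_form m X (\<lambda>a b. M a b - M' a b) = gram_form m X M - gram_form m X M'"
  by (simp add: gram_form_def algebra_simps sum_subtractf)

lemma gram_form_uminus: "gram_form m X (\<lambda>a b. - M a b) = - gram_form m X M"
  by (simp add: gram_form_def sum_negf)

lemma gram_form_scale: "gram_form m X (\<lambda>a b. c * M a b) = c * gram_form m X M"
  by (simp add: gram_form_def sum_distrib_left mult.assoc)

lemma gram_form_sum: "gram_form m X (\<lambda>a b. \<Sum>i\<in>I. M i a b) = (\<Sum>i\<in>I. gram_form m X (M i))"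
  unfolding gram_form_def sum_distrib_right by (simp add: sum.swap[where A = I])

lemma gram_form_outer: "gram_form m X (outer u v) = lincomb m X u \<bullet> lincomb m X v"
  unfolding gram_form_def lincomb_def outer_def inner_sum_left
  by (simp add: inner_sum_right sum_distrib_left mult_ac)

lemma psd_imp_gram_form_nonneg:
  fixes X :: "nat \<Rightarrow> 'a::euclidean_space"
  assumes "psd m S"
  shows "0 \<le> gram_form m X S"
proof -
  have "gram_form m X S = (\<Sum>a<m. \<Sum>b<m. \<Sum>c\<in>Basis. (X a \<bullet> c) * S a b * (X b \<bullet> c))"
    unfolding gram_form_def by (subst euclidean_inner) (simp add: sum_distrib_left mult_ac)
  also have "\<dots> = (\<Sum>c\<in>Basis. \<Sum>a<m. \<Sum>b<m. (X a \<bullet> c) * S a b * (X b \<bullet> c))"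
    by (simp add: sum.swap[where B = Basis])
  also have "\<dots> \<ge> 0"
  proof (rule sum_nonneg)
    fix c :: 'a
    show "0 \<le> (\<Sum>a<m. \<Sum>b<m. (X a \<bullet> c) * S a b * (X b \<bullet> c))"
      using assms unfolding psd_def by (rule spec)
  qed
  finally show ?thesis .
qed

lemma lincomb_diff: "lincomb m X (\<lambda>j. p j - q j) = lincomb m X p - lincomb m X q"
  by (simp add: lincomb_def scaleR_diff_left sum_subtractf)

lemma lincomb_ev: "lincomb m X (ev i) = (if i < m then X i else 0)"
  by (simp add: lincomb_def ev_def if_distrib[of "\<lambda>c. c *\<^sub>R _"] cong: if_cong)

lemma lincomb_wv:
  "lincomb m X (wv \<mu> L \<alpha> k)
     = (1 - \<mu> / L * (\<Sum>i<k. \<alpha> k i)) *\<^sub>R lincomb m X wv0 - (\<Sum>i<k. (\<alpha> k i / L) *\<^sub>R lincomb m X (gv i))"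
  unfolding lincomb_def wv_def
  by (simp add: scaleR_diff_left sum_subtractf scaleR_sum_left scaleR_sum_right
      sum.swap[where B = "{..<k}"] mult_ac)

lemma wv_0: "wv \<mu> L \<alpha> 0 = wv0"
  by (simp add: wv_def)

definition interpolation_combination ::
    "real \<Rightarrow> nat \<Rightarrow> (nat \<Rightarrow> real) \<Rightarrow> (nat \<Rightarrow> real) \<Rightarrow> real \<Rightarrow> (nat \<Rightarrow> 'a::real_inner) \<Rightarrow> (nat \<Rightarrow> 'a) \<Rightarrow> real"
  where
  "interpolation_combination K N lam lamS lamN G W =
     lamN * (norm (G (N - 1)))\<^sup>2 / (2 * K)
     + (\<Sum>i<N. lamS i * ((norm (G i))\<^sup>2 / (2 * K) - G i \<bullet> W i))
     + (\<Sum>i<N - 1. lam i * (G (i + 1) \<bullet> (W i - W (i + 1)) + (norm (G i - G (i + 1)))\<^sup>2 / (2 * K)))"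

lemma gram_form_Smat:
  fixes m :: nat and X :: "nat \<Rightarrow> 'a::real_inner"
  defines "U \<equiv> lincomb m X"
  shows "gram_form m X (Smat \<mu> L \<alpha> N \<tau> lam lamS lamN)
    = \<tau> * (norm (U wv0))\<^sup>2 - (norm (U (wv \<mu> L \<alpha> N)))\<^sup>2
      + interpolation_combination (L - \<mu>) N lam lamS lamN (\<lambda>i. U (gv i)) (\<lambda>k. U (wv \<mu> L \<alpha> k))"
proof -
  have expand: "gram_form m X (Smat \<mu> L \<alpha> N \<tau> lam lamS lamN) =
     \<tau> * (U wv0 \<bullet> U wv0) - U (wv \<mu> L \<alpha> N) \<bullet> U (wv \<mu> L \<alpha> N)
     + lamN / (2 * (L - \<mu>)) * (U (gv (N - 1)) \<bullet> U (gv (N - 1)))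
     + (\<Sum>i<N. lamS i / 2 * (- (U (gv i) \<bullet> U (wv \<mu> L \<alpha> i)) - U (wv \<mu> L \<alpha> i) \<bullet> U (gv i)
                              + 1 / (L - \<mu>) * (U (gv i) \<bullet> U (gv i))))
     + (\<Sum>i<N - 1. lam i / 2 *
         ( U (gv (i + 1)) \<bullet> (U (wv \<mu> L \<alpha> i) - U (wv \<mu> L \<alpha> (i + 1)))
         + (U (wv \<mu> L \<alpha> i) - U (wv \<mu> L \<alpha> (i + 1))) \<bullet> U (gv (i + 1))
         + 1 / (L - \<mu>) * ((U (gv i) - U (gv (i + 1))) \<bullet> (U (gv i) - U (gv (i + 1))))))"
    unfolding Smat_def U_def
    by (simp only: gram_form_add gram_form_diff gram_form_uminus gram_form_scale gram_form_sum
        gram_form_outer lincomb_diff)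
  define c where "c = 1 / (L - \<mu>) / 2"
  have "1 / (L - \<mu>) = 2 * c"
    unfolding c_def by (metis field_sum_of_halves mult_2)
  moreover have "\<And>x. x / (2 * (L - \<mu>)) = c * x"
    by (simp add: c_def)
  ultimately have "interpolation_combination (L - \<mu>) N lam lamS lamN (\<lambda>i. U (gv i)) (\<lambda>k. U (wv \<mu> L \<alpha> k))
     = lamN / (2 * (L - \<mu>)) * (U (gv (N - 1)) \<bullet> U (gv (N - 1)))
     + (\<Sum>i<N. lamS i / 2 * (- (U (gv i) \<bullet> U (wv \<mu> L \<alpha> i)) - U (wv \<mu> L \<alpha> i) \<bullet> U (gv i)
                              + 1 / (L - \<mu>) * (U (gv i) \<bullet> U (gv i))))
     + (\<Sum>i<N - 1. lam i / 2 *
         ( U (gv (i + 1)) \<bullet> (U (wv \<mu> L \<alpha> i) - U (wv \<mu> L \<alpha> (i + 1)))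
         + (U (wv \<mu> L \<alpha> i) - U (wv \<mu> L \<alpha> (i + 1))) \<bullet> U (gv (i + 1))
         + 1 / (L - \<mu>) * ((U (gv i) - U (gv (i + 1))) \<bullet> (U (gv i) - U (gv (i + 1))))))"
    unfolding interpolation_combination_def power2_norm_eq_inner
    by (intro arg_cong2[where f = "(+)"] sum.cong refl) (simp_all add: inner_commute algebra_simps)
  then show ?thesis
    unfolding expand power2_norm_eq_inner by linarith
qed

lemma interpolation_combination_nonpos:
  fixes G W :: "nat \<Rightarrow> 'a::real_inner" and F :: "nat \<Rightarrow> real"
  assumes "\<forall>i<N - 1. 0 \<le> lam i" and "\<forall>i<N. 0 \<le> lamS i" and "0 \<le> lamN"
    and cancel: "(\<Sum>i<N - 1. lam i * (F (i + 1) - F i)) + (\<Sum>i<N. lamS i * F i) - lamN * F (N - 1) = 0"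
    and at_minimizer: "\<And>i. i < N \<Longrightarrow> (norm (G i))\<^sup>2 / (2 * K) - G i \<bullet> W i \<le> - F i"
    and consecutive: "\<And>i. i < N - 1 \<Longrightarrow>
          G (i + 1) \<bullet> (W i - W (i + 1)) + (norm (G i - G (i + 1)))\<^sup>2 / (2 * K) \<le> F i - F (i + 1)"
    and from_minimizer: "(norm (G (N - 1)))\<^sup>2 / (2 * K) \<le> F (N - 1)"
  shows "interpolation_combination K N lam lamS lamN G W \<le> 0"
proof -
  have "lamN * (norm (G (N - 1)))\<^sup>2 / (2 * K) \<le> lamN * F (N - 1)"
    using mult_left_mono[OF from_minimizer \<open>0 \<le> lamN\<close>] by simp
  moreover have "(\<Sum>i<N. lamS i * ((norm (G i))\<^sup>2 / (2 * K) - G i \<bullet> W i)) \<le> (\<Sum>i<N. lamS i * - F i)"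
    using assms(2) at_minimizer by (intro sum_mono mult_left_mono) auto
  moreover have "(\<Sum>i<N - 1. lam i * (G (i + 1) \<bullet> (W i - W (i + 1)) + (norm (G i - G (i + 1)))\<^sup>2 / (2 * K)))
      \<le> (\<Sum>i<N - 1. lam i * (F i - F (i + 1)))"
    using assms(1) consecutive by (intro sum_mono mult_left_mono) auto
  moreover have "(\<Sum>i<N. lamS i * - F i) = - (\<Sum>i<N. lamS i * F i)"
    by (simp add: sum_negf)
  moreover have "(\<Sum>i<N - 1. lam i * (F i - F (i + 1))) = - (\<Sum>i<N - 1. lam i * (F (i + 1) - F i))"
    by (simp add: algebra_simps flip: sum_negf)
  ultimately show ?thesis
    using cancel unfolding interpolation_combination_def by linarith
qed

lemma sum_fv_mult: "k < N \<Longrightarrow> (\<Sum>j<N. fv k j * F j) = F k"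
  by (simp add: fv_def ev_def if_distrib[of "\<lambda>c. c * _"] cong: if_cong)

lemma sum_weighted_swap:
  fixes F :: "'j \<Rightarrow> 'b::semiring_0"
  shows "(\<Sum>j\<in>J. (\<Sum>i\<in>I. a i * v i j) * F j) = (\<Sum>i\<in>I. a i * (\<Sum>j\<in>J. v i j * F j))"
  unfolding sum_distrib_right sum_distrib_left mult.assoc by (rule sum.swap)

lemma multiplier_constraint_cancels:
  fixes F :: "nat \<Rightarrow> real"
  assumes "0 < N"
    and "\<forall>j<N. (\<Sum>i<N - 1. lam i * (fv (i + 1) j - fv i j)) + (\<Sum>i<N. lamS i * fv i j)
              - lamN * fv (N - 1) j = 0"
  shows "(\<Sum>i<N - 1. lam i * (F (i + 1) - F i)) + (\<Sum>i<N. lamS i * F i) - lamN * F (N - 1) = 0"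
proof -
  have "0 = (\<Sum>j<N. ((\<Sum>i<N - 1. lam i * (fv (i + 1) j - fv i j)) + (\<Sum>i<N. lamS i * fv i j)
              - lamN * fv (N - 1) j) * F j)"
    using assms(2) by simp
  also have "\<dots> = (\<Sum>j<N. (\<Sum>i<N - 1. lam i * (fv (i + 1) j - fv i j)) * F j)
      + (\<Sum>j<N. (\<Sum>i<N. lamS i * fv i j) * F j) - lamN * (\<Sum>j<N. fv (N - 1) j * F j)"
    by (simp only: distrib_right left_diff_distrib sum.distrib sum_subtractf sum_distrib_left
        mult.assoc)
  also have "\<dots> = (\<Sum>i<N - 1. lam i * (\<Sum>j<N. (fv (i + 1) j - fv i j) * F j))
      + (\<Sum>i<N. lamS i * (\<Sum>j<N. fv i j * F j)) - lamN * (\<Sum>j<N. fv (N - 1) j * F j)"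
    by (simp only: sum_weighted_swap)
  also have "\<dots> = (\<Sum>i<N - 1. lam i * (F (i + 1) - F i)) + (\<Sum>i<N. lamS i * F i) - lamN * F (N - 1)"
    using assms(1) by (simp add: left_diff_distrib sum_subtractf sum_fv_mult)
  finally show ?thesis by simp
qed

lemma lincomb_wv_iterate:
  fixes w G :: "nat \<Rightarrow> 'a::real_vector"
  assumes iter: "\<forall>k\<in>{1..N}. w k - ws =
           (1 - \<mu> / L * (\<Sum>i<k. \<alpha> k i)) *\<^sub>R (w 0 - ws) - (\<Sum>i<k. (\<alpha> k i / L) *\<^sub>R G i)"
    and "k \<le> N"
  defines "X \<equiv> \<lambda>a. if a = 0 then w 0 - ws else G (a - 1)"
  shows "lincomb (N + 1) X (wv \<mu> L \<alpha> k) = w k - ws"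
proof (cases "k = 0")
  case True
  then show ?thesis by (simp add: wv_0 wv0_def lincomb_ev X_def)
next
  case False
  have "lincomb (N + 1) X (gv i) = G i" if "i < k" for i
    using that \<open>k \<le> N\<close> by (simp add: gv_def lincomb_ev X_def)
  then have "lincomb (N + 1) X (wv \<mu> L \<alpha> k)
      = (1 - \<mu> / L * (\<Sum>i<k. \<alpha> k i)) *\<^sub>R (w 0 - ws) - (\<Sum>i<k. (\<alpha> k i / L) *\<^sub>R G i)"
    by (simp add: lincomb_wv wv0_def lincomb_ev X_def)
  also have "\<dots> = w k - ws"
    using iter False \<open>k \<le> N\<close> by simp
  finally show ?thesis .
qed

lemma iterates_eq_minimizer:
  fixes k N :: nat and w :: "nat \<Rightarrow> 'a::real_vector"
  assumes "g ws = 0" and "w 0 = ws"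
    and iter: "\<forall>k\<in>{1..N}. w k - ws =
           (1 - \<mu> / L * (\<Sum>i<k. \<alpha> k i)) *\<^sub>R (w 0 - ws)
           - (\<Sum>i<k. (\<alpha> k i / L) *\<^sub>R (g (w i) - \<mu> *\<^sub>R (w i - ws)))"
  shows "k \<le> N \<Longrightarrow> w k = ws"
proof (induction k rule: less_induct)
  case (less k)
  show ?case
  proof (cases "k = 0")
    case True
    then show ?thesis using \<open>w 0 = ws\<close> by simp
  next
    case False
    have "k \<in> {1..N}"
      using False less.prems by simp
    then have "w k - ws = (1 - \<mu> / L * (\<Sum>i<k. \<alpha> k i)) *\<^sub>R (w 0 - ws)
           - (\<Sum>i<k. (\<alpha> k i / L) *\<^sub>R (g (w i) - \<mu> *\<^sub>R (w i - ws)))"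
      using iter by blast
    moreover have "(\<Sum>i<k. (\<alpha> k i / L) *\<^sub>R (g (w i) - \<mu> *\<^sub>R (w i - ws))) = 0"
      using less \<open>g ws = 0\<close> by (intro sum.neutral) auto
    ultimately show ?thesis
      using \<open>w 0 = ws\<close> by simp
  qed
qed

lemma ereal_le_Inf_mult:
  fixes n c :: real and S :: "ereal set"
  assumes "0 < c" and "\<And>x. x \<in> S \<Longrightarrow> ereal n \<le> x * ereal c"
  shows "ereal n \<le> Inf S * ereal c"
proof -
  have "ereal (n / c) \<le> Inf S"
  proof (rule Inf_greatest)
    fix x assume "x \<in> S"
    then have "ereal n \<le> x * ereal c" by (rule assms(2))
    then show "ereal (n / c) \<le> x"
      using assms(1) by (cases x) (auto simp: divide_le_eq)
  qed
  then have "ereal (n / c) * ereal c \<le> Inf S * ereal c"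
    by (rule ereal_mult_right_mono) (use assms(1) in simp)
  then show ?thesis
    using assms(1) by simp
qed

lemma iterates_interpolation_combination_nonpos:
  assumes "\<mu> < L" and F: "F_class \<mu> L f g" and min: "\<forall>v. f ws \<le> f v" and "0 < N"
    and feas: "UB_feasible \<mu> L \<alpha> N \<tau> lam lamS lamN"
    and G: "\<And>i. i < N \<Longrightarrow> G i = shifted_grad \<mu> ws g (w i)"
    and W: "\<And>i. i < N \<Longrightarrow> W i = w i - ws"
  shows "interpolation_combination (L - \<mu>) N lam lamS lamN G W \<le> 0"
proof -
  define F where "F i = shifted_fun \<mu> ws f (w i) - shifted_fun \<mu> ws f ws" for i
  have grad_ws: "shifted_grad \<mu> ws g ws = 0"
    using F_class_minimizer_grad_eq_0[OF F min] by (simp add: shifted_grad_def)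
  note interpolation = F_class_shifted_interpolation[OF \<open>\<mu> < L\<close> F, of ws]
  from feas have multipliers: "\<forall>i<N - 1. 0 \<le> lam i" "\<forall>i<N. 0 \<le> lamS i" "0 \<le> lamN"
    and constraint: "\<forall>j<N. (\<Sum>i<N - 1. lam i * (fv (i + 1) j - fv i j)) + (\<Sum>i<N. lamS i * fv i j)
              - lamN * fv (N - 1) j = 0"
    unfolding UB_feasible_def by auto
  show ?thesis
  proof (rule interpolation_combination_nonpos[where F = F, OF multipliers])
    show "(\<Sum>i<N - 1. lam i * (F (i + 1) - F i)) + (\<Sum>i<N. lamS i * F i) - lamN * F (N - 1) = 0"
      using \<open>0 < N\<close> constraint by (rule multiplier_constraint_cancels)
    show "(norm (G i))\<^sup>2 / (2 * (L - \<mu>)) - G i \<bullet> W i \<le> - F i" if "i < N" for i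
      using interpolation[where x = ws and y = "w i"] that
      by (simp add: G W grad_ws F_def inner_diff_right)
    show "G (i + 1) \<bullet> (W i - W (i + 1)) + (norm (G i - G (i + 1)))\<^sup>2 / (2 * (L - \<mu>))
        \<le> F i - F (i + 1)" if "i < N - 1" for i
      using interpolation[where x = "w i" and y = "w (i + 1)"] that
      by (simp add: G W F_def)
    show "(norm (G (N - 1)))\<^sup>2 / (2 * (L - \<mu>)) \<le> F (N - 1)"
      using interpolation[where x = "w (N - 1)" and y = ws] \<open>0 < N\<close>
      by (simp add: G grad_ws F_def)
  qed
qed

lemma UB_feasible_bound:
  fixes N :: nat and \<mu> L :: real and \<alpha> :: "nat \<Rightarrow> nat \<Rightarrow> real"
    and f :: "'a::euclidean_space \<Rightarrow> real" and g :: "'a \<Rightarrow> 'a"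
    and w :: "nat \<Rightarrow> 'a" and ws :: 'a
  assumes "\<mu> < L" and "F_class \<mu> L f g" and "\<forall>v. f ws \<le> f v"
    and iter: "\<forall>k\<in>{1..N}. w k - ws =
           (1 - \<mu> / L * (\<Sum>i<k. \<alpha> k i)) *\<^sub>R (w 0 - ws)
           - (\<Sum>i<k. (\<alpha> k i / L) *\<^sub>R (g (w i) - \<mu> *\<^sub>R (w i - ws)))"
    and feas: "UB_feasible \<mu> L \<alpha> N \<tau> lam lamS lamN"
  shows "(norm (w N - ws))\<^sup>2 \<le> \<tau> * (norm (w 0 - ws))\<^sup>2"
proof -
  define G where "G i = shifted_grad \<mu> ws g (w i)" for i
  define X where "X a = (if a = 0 then w 0 - ws else G (a - 1))" for a
  define U where "U = lincomb (N + 1) X"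
  have UG: "U (gv i) = G i" if "i < N" for i
    using that by (simp add: U_def gv_def lincomb_ev X_def)
  have "\<forall>k\<in>{1..N}. w k - ws =
           (1 - \<mu> / L * (\<Sum>i<k. \<alpha> k i)) *\<^sub>R (w 0 - ws) - (\<Sum>i<k. (\<alpha> k i / L) *\<^sub>R G i)"
    using iter by (simp add: G_def shifted_grad_def)
  then have UW: "U (wv \<mu> L \<alpha> k) = w k - ws" if "k \<le> N" for k
    unfolding U_def X_def using that by (rule lincomb_wv_iterate)
  have "0 \<le> gram_form (N + 1) X (Smat \<mu> L \<alpha> N \<tau> lam lamS lamN)"
    using feas unfolding UB_feasible_def by (blast intro: psd_imp_gram_form_nonneg)
  also have "\<dots> = \<tau> * (norm (w 0 - ws))\<^sup>2 - (norm (w N - ws))\<^sup>2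
      + interpolation_combination (L - \<mu>) N lam lamS lamN (\<lambda>i. U (gv i)) (\<lambda>k. U (wv \<mu> L \<alpha> k))"
    using UW[of 0] UW[of N] by (simp add: gram_form_Smat U_def wv_0)
  also have "interpolation_combination (L - \<mu>) N lam lamS lamN (\<lambda>i. U (gv i)) (\<lambda>k. U (wv \<mu> L \<alpha> k)) \<le> 0"
  proof (cases "N = 0")
    case True
    then show ?thesis
      by (simp add: interpolation_combination_def U_def gv_def lincomb_ev)
  next
    case False
    then show ?thesis
      using assms(1-3) feas UG UW G_def
      by (intro iterates_interpolation_combination_nonpos[where w = w]) auto
  qed
  finally show ?thesis by simp
qed

theorem lemma5:
  fixes N :: nat and \<mu> L :: real and \<alpha> :: "nat \<Rightarrow> nat \<Rightarrow> real"
    and f :: "'a::euclidean_space \<Rightarrow> real" and g :: "'a \<Rightarrow> 'a"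
    and w :: "nat \<Rightarrow> 'a" and ws :: 'a
  assumes "0 \<le> \<mu>" and "\<mu> < L"
    and "F_class \<mu> L f g"
    and "\<forall>v. f ws \<le> f v"
    and "\<forall>k\<in>{1..N}. w k - ws =
           (1 - \<mu> / L * (\<Sum>i<k. \<alpha> k i)) *\<^sub>R (w 0 - ws)
           - (\<Sum>i<k. (\<alpha> k i / L) *\<^sub>R (g (w i) - \<mu> *\<^sub>R (w i - ws)))"
  shows "ereal ((norm (w N - ws))\<^sup>2) \<le> UB \<mu> L \<alpha> N * ereal ((norm (w 0 - ws))\<^sup>2)"
proof (cases "w 0 = ws")
  case True
  have "g ws = 0"
    using assms(3,4) by (rule F_class_minimizer_grad_eq_0)
  then have "w N = ws"
    using True assms(5) by (rule iterates_eq_minimizer) simp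
  then show ?thesis
    using True by (simp add: zero_ereal_def[symmetric])
next
  case False
  show ?thesis
    unfolding UB_def
  proof (rule ereal_le_Inf_mult)
    show "0 < (norm (w 0 - ws))\<^sup>2"
      using False by simp
    fix x assume "x \<in> {ereal \<tau> |\<tau> lam lamS lamN. UB_feasible \<mu> L \<alpha> N \<tau> lam lamS lamN}"
    then show "ereal ((norm (w N - ws))\<^sup>2) \<le> x * ereal ((norm (w 0 - ws))\<^sup>2)"
      using UB_feasible_bound[OF assms(2-5)] by auto
  qed
qed

end
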